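(* Let $X$, $\mathcal{B}$, $\Delta$, the map $\iota:X\to\Delta$ and the Gelfand transform be as in the context (in particular $\mathcal{B}$ vanishes nowhere on $X$). For $f\in\mathcal{B}$ and $k\in\mathbb{N}\setminus\{0\}$ let $N_k(f):=\{x\in X: |f(x)|\geq 1/k\}$. Then the closure of $\iota(N_k(f))$ in $\Delta$ is compact.
   Context: $X$ is a nonempty set and $\mathcal{B}$ is a real vector space of bounded functions $X\to\mathbb{R}$ closed under pointwise multiplication, pointwise max and min, with $f\wedge1\in\mathcal{B}$ for $f\in\mathcal{B}$. Assume that for every $x\in X$ there is $f\in\mathcal{B}$ with $f(x)\neq0$. $A(\mathcal{B})$ is the supremum-norm closure of $\mathcal{B}+i\mathcal{B}$, a commutative $C^\ast$-algebra with pointwise operations and complex conjugation as involution; $\Delta$ is its spectrum (nonzero continuous multiplicative linear functionals with the Gelfand topology), locally compact Hausdorff; $\hat a(\varphi)=\varphi(a)$ is the Gelfand transform, an isometric $^\ast$-isomorphism $A(\mathcal{B})\to C_0(\Delta)$. The map $\iota:X\to\Delta$ is defined by $\iota(x)(a)=a(x)$ for $a\in A(\mathcal{B})$. *)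

theory Defs
  imports "HOL-Analysis.Analysis"
begin

text \<open>The ground set X is modelled as the (nonempty) type 'a.
  B is a set of real-valued functions on X.\<close>

definition admissible_B :: "('a \<Rightarrow> real) set \<Rightarrow> bool" where
  "admissible_B B \<longleftrightarrow>
     (\<lambda>x. 0) \<in> B \<and>
     (\<forall>f\<in>B. \<forall>g\<in>B. (\<lambda>x. f x + g x) \<in> B) \<and>
     (\<forall>f\<in>B. \<forall>c::real. (\<lambda>x. c * f x) \<in> B) \<and>
     (\<forall>f\<in>B. bounded (range f)) \<and>
     (\<forall>f\<in>B. \<forall>g\<in>B. (\<lambda>x. f x * g x) \<in> B) \<and>
     (\<forall>f\<in>B. \<forall>g\<in>B. (\<lambda>x. max (f x) (g x)) \<in> B) \<and>
     (\<forall>f\<in>B. \<forall>g\<in>B. (\<lambda>x. min (f x) (g x)) \<in> B) \<and>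
     (\<forall>f\<in>B. (\<lambda>x. min (f x) 1) \<in> B)"

definition supnorm :: "('a \<Rightarrow> complex) \<Rightarrow> real" where
  "supnorm a = (SUP x. cmod (a x))"

text \<open>A(B): the sup-norm closure of B + iB.\<close>
definition Aalg :: "('a \<Rightarrow> real) set \<Rightarrow> ('a \<Rightarrow> complex) set" where
  "Aalg B = {a. \<forall>e>0. \<exists>f\<in>B. \<exists>g\<in>B.
       supnorm (\<lambda>x. a x - (complex_of_real (f x) + \<i> * complex_of_real (g x))) < e}"

definition spectrum_Delta :: "('a \<Rightarrow> real) set \<Rightarrow> (('a \<Rightarrow> complex) \<Rightarrow> complex) set" where
  "spectrum_Delta B = {\<phi>. \<phi> \<in> extensional (Aalg B) \<and>
     (\<forall>a\<in>Aalg B. \<forall>b\<in>Aalg B. \<phi> (\<lambda>x. a x + b x) = \<phi> a + \<phi> b) \<and>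
     (\<forall>a\<in>Aalg B. \<forall>c::complex. \<phi> (\<lambda>x. c * a x) = c * \<phi> a) \<and>
     (\<forall>a\<in>Aalg B. \<forall>b\<in>Aalg B. \<phi> (\<lambda>x. a x * b x) = \<phi> a * \<phi> b) \<and>
     (\<forall>a\<in>Aalg B. \<forall>e>0. \<exists>d>0. \<forall>b\<in>Aalg B.
         supnorm (\<lambda>x. b x - a x) < d \<longrightarrow> cmod (\<phi> b - \<phi> a) < e) \<and>
     (\<exists>a\<in>Aalg B. \<phi> a \<noteq> 0)}"

text \<open>Gelfand topology: the weak-* topology (pointwise convergence on A(B)),
  i.e. the coarsest topology making all evaluations \<phi> \<mapsto> \<phi> a continuous.\<close>
definition gelfand_top :: "('a \<Rightarrow> real) set \<Rightarrow> (('a \<Rightarrow> complex) \<Rightarrow> complex) topology" where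
  "gelfand_top B = subtopology (product_topology (\<lambda>_. euclidean) (Aalg B)) (spectrum_Delta B)"

definition iota :: "('a \<Rightarrow> real) set \<Rightarrow> 'a \<Rightarrow> (('a \<Rightarrow> complex) \<Rightarrow> complex)" where
  "iota B x = restrict (\<lambda>a. a x) (Aalg B)"

definition Nk :: "nat \<Rightarrow> ('a \<Rightarrow> real) \<Rightarrow> 'a set" where
  "Nk k f = {x. \<bar>f x\<bar> \<ge> 1 / real k}"

end

theory Submission
  imports Defs
begin

text \<open>Every character \<phi> of A(B) is contractive, \<open>|\<phi> a| \<le> \<parallel>a\<parallel>\<close>: if \<open>\<phi> b = 1\<close> with
  \<open>\<parallel>b\<parallel> < 1\<close>, then \<open>\<phi> (b\<^sup>n) = 1\<close> while \<open>b\<^sup>n \<rightarrow> 0\<close> uniformly, contradicting continuity.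
  Conversely a contractive multiplicative linear functional is continuous, so the characters are
  exactly the nonzero contractive ones. Contractivity is a closed condition inside the product of
  the discs of radius \<open>\<parallel>a\<parallel>\<close>, \<open>a \<in> A(B)\<close>, which is compact by Tychonoff; adding the closed
  condition \<open>|\<phi> f| \<ge> 1/k\<close> excludes \<open>\<phi> = 0\<close>. This gives a compact set of characters containing
  \<open>\<iota>(N\<^sub>k(f))\<close>, hence also its closure.\<close>

lemma closedin_Collect_all:
  assumes "\<And>i. closedin X {x \<in> topspace X. P i x}"
  shows "closedin X {x \<in> topspace X. \<forall>i. P i x}"
proof -
  have "{x \<in> topspace X. \<forall>i. P i x} = (\<Inter>i. {x \<in> topspace X. P i x})"
    by auto
  then show ?thesis
    using assms by (simp add: closedin_INT)
qed

lemma closedin_Collect_ball: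
  assumes "\<And>i. i \<in> I \<Longrightarrow> closedin X {x \<in> topspace X. P i x}"
  shows "closedin X {x \<in> topspace X. \<forall>i\<in>I. P i x}"
proof -
  have "closedin X {x \<in> topspace X. i \<in> I \<longrightarrow> P i x}" for i
    using assms by (cases "i \<in> I") auto
  then show ?thesis
    using closedin_Collect_all[of X "\<lambda>i x. i \<in> I \<longrightarrow> P i x"] by (simp add: Ball_def)
qed

lemma closedin_Collect_conj:
  assumes "closedin X {x \<in> topspace X. P x}" and "closedin X {x \<in> topspace X. Q x}"
  shows "closedin X {x \<in> topspace X. P x \<and> Q x}"
proof -
  have "{x \<in> topspace X. P x \<and> Q x} = {x \<in> topspace X. P x} \<inter> {x \<in> topspace X. Q x}"
    by blast
  then show ?thesis
    using closedin_Int[OF assms] by simp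
qed

text \<open>Outside I the evaluation is constantly \<open>undefined\<close> on the (extensional) product.\<close>
lemma continuous_map_product_eval:
  "continuous_map (product_topology (\<lambda>_. euclidean) I) euclidean (\<lambda>f. f i)"
proof (cases "i \<in> I")
  case True
  then show ?thesis
    using continuous_map_product_projection[of i I "\<lambda>_. euclidean"] by simp
next
  case False
  show ?thesis
  proof (rule continuous_map_eq)
    show "continuous_map (product_topology (\<lambda>_. euclidean) I) euclidean (\<lambda>_. undefined)"
      by (rule continuous_map_const[THEN iffD2]) simp
    show "undefined = f i" if "f \<in> topspace (product_topology (\<lambda>_. euclidean) I)" for f
      using that False by (simp add: PiE_def extensional_def)
  qed
qed


lemma closedin_continuous_map_le_const:
  "continuous_map X euclideanreal f \<Longrightarrow> closedin X {x \<in> topspace X. f x \<le> c}"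
  by (simp add: continuous_map_upper_lower_semicontinuous_le)

lemma closedin_continuous_map_ge_const:
  "continuous_map X euclideanreal f \<Longrightarrow> closedin X {x \<in> topspace X. c \<le> f x}"
  by (simp add: continuous_map_upper_lower_semicontinuous_le)

lemma continuous_map_mult:
  fixes f g :: "'a \<Rightarrow> 'b::real_normed_algebra"
  shows "continuous_map X euclidean f \<Longrightarrow> continuous_map X euclidean g \<Longrightarrow>
    continuous_map X euclidean (\<lambda>x. f x * g x)"
  by (simp add: continuous_map_atin tendsto_mult)

lemma norm_mult_diff_le:
  fixes a b c d :: "'a::real_normed_algebra"
  shows "norm (a * b - c * d) \<le> norm a * norm (b - d) + norm (a - c) * norm d"
proof -
  have "a * b - c * d = a * (b - d) + (a - c) * d"
    by (simp add: algebra_simps)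
  then have "norm (a * b - c * d) \<le> norm (a * (b - d)) + norm ((a - c) * d)"
    by (metis norm_triangle_ineq)
  then show ?thesis
    using norm_mult_ineq[of a "b - d"] norm_mult_ineq[of "a - c" d] by linarith
qed

lemma supnorm_le: "(\<And>x. cmod (u x) \<le> M) \<Longrightarrow> supnorm u \<le> M"
  unfolding supnorm_def by (rule cSUP_least) auto

lemma norm_le_supnorm:
  assumes "bounded (range u)"
  shows "cmod (u x) \<le> supnorm u"
proof -
  obtain M where "\<forall>y. cmod (u y) \<le> M"
    using assms by (auto simp: bounded_iff)
  then have "bdd_above (range (\<lambda>y. cmod (u y)))"
    by (auto intro: bdd_aboveI2)
  then show ?thesis
    unfolding supnorm_def by (rule cSUP_upper[OF UNIV_I])
qed

lemma supnorm_nonneg: "bounded (range u) \<Longrightarrow> 0 \<le> supnorm u"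
  using norm_le_supnorm[of u undefined] norm_ge_zero order_trans by blast

lemma unbounded_diff:
  fixes a c :: "'a \<Rightarrow> 'b::real_normed_vector"
  shows "\<not> bounded (range a) \<Longrightarrow> bounded (range c) \<Longrightarrow> \<not> bounded (range (\<lambda>x. a x - c x))"
  using bounded_plus_comp[of "\<lambda>x. a x - c x" UNIV c] by auto

text \<open>On unbounded functions \<open>supnorm\<close> is an unspecified junk value.\<close>
lemma supnorm_unbounded_eq:
  assumes "\<not> bounded (range u)" and "\<not> bounded (range v)"
  shows "supnorm u = supnorm v"
proof -
  have no_bound: "(\<lambda>z. \<forall>y\<in>range (\<lambda>x. cmod (w x)). y \<le> z) = (\<lambda>z. False)"
    if "\<not> bounded (range w)" for w
    using that by (auto simp: bounded_iff fun_eq_iff)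
  show ?thesis
    unfolding supnorm_def Sup_real_def no_bound[OF assms(1)] no_bound[OF assms(2)] ..
qed


definition uniform_closure :: "('a \<Rightarrow> complex) set \<Rightarrow> ('a \<Rightarrow> complex) set" where
  "uniform_closure C = {a. \<forall>e>0. \<exists>c\<in>C. supnorm (\<lambda>x. a x - c x) < e}"

lemma uniform_closureI:
  assumes "\<And>e. e > 0 \<Longrightarrow> \<exists>c\<in>C. \<forall>x. cmod (a x - c x) \<le> e"
  shows "a \<in> uniform_closure C"
  unfolding uniform_closure_def
proof (intro CollectI allI impI)
  fix e :: real
  assume "e > 0"
  then obtain c where "c \<in> C" "\<forall>x. cmod (a x - c x) \<le> e / 2"
    using assms[of "e / 2"] by auto
  then show "\<exists>c\<in>C. supnorm (\<lambda>x. a x - c x) < e"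
    using \<open>e > 0\<close> supnorm_le[of "\<lambda>x. a x - c x" "e / 2"] by force
qed

lemma subset_uniform_closure: "C \<subseteq> uniform_closure C"
proof
  fix c assume "c \<in> C"
  then show "c \<in> uniform_closure C"
    by (intro uniform_closureI bexI[of _ c]) auto
qed

locale bounded_function_algebra =
  fixes C :: "('a \<Rightarrow> complex) set"
  assumes bounded: "c \<in> C \<Longrightarrow> bounded (range c)"
    and add: "c \<in> C \<Longrightarrow> d \<in> C \<Longrightarrow> (\<lambda>x. c x + d x) \<in> C"
    and scale: "c \<in> C \<Longrightarrow> (\<lambda>x. z * c x) \<in> C"
    and mult: "c \<in> C \<Longrightarrow> d \<in> C \<Longrightarrow> (\<lambda>x. c x * d x) \<in> C"
begin

lemma uniform_closure_approx:
  assumes "a \<in> uniform_closure C" "bounded (range a)" "e > 0"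
  obtains c where "c \<in> C" "\<And>x. cmod (a x - c x) < e"
proof -
  obtain c where c: "c \<in> C" "supnorm (\<lambda>x. a x - c x) < e"
    using assms unfolding uniform_closure_def by blast
  have "bounded (range (\<lambda>x. a x - c x))"
    using bounded_minus_comp[OF assms(2) bounded[OF c(1)]] .
  then show ?thesis
    using that[OF c(1)] c(2) norm_le_supnorm by (meson le_less_trans)
qed

lemma uniform_closure_add:
  assumes a: "a \<in> uniform_closure C" "bounded (range a)"
    and b: "b \<in> uniform_closure C" "bounded (range b)"
  shows "(\<lambda>x. a x + b x) \<in> uniform_closure C"
proof (rule uniform_closureI)
  fix e :: real
  assume "e > 0"
  then have "e / 2 > 0"
    by simp
  obtain c where "c \<in> C" and c: "\<And>x. cmod (a x - c x) < e / 2"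
    using uniform_closure_approx[OF a \<open>e / 2 > 0\<close>] by blast
  obtain d where "d \<in> C" and d: "\<And>x. cmod (b x - d x) < e / 2"
    using uniform_closure_approx[OF b \<open>e / 2 > 0\<close>] by blast
  have "cmod (a x + b x - (c x + d x)) \<le> e" for x
  proof -
    have "cmod (a x + b x - (c x + d x)) \<le> cmod (a x - c x) + cmod (b x - d x)"
      by (metis add_diff_add norm_triangle_ineq)
    then show ?thesis
      using c[of x] d[of x] by linarith
  qed
  then show "\<exists>c\<in>C. \<forall>x. cmod (a x + b x - c x) \<le> e"
    using add[OF \<open>c \<in> C\<close> \<open>d \<in> C\<close>] by (intro bexI[of _ "\<lambda>x. c x + d x"]) auto
qed

lemma uniform_closure_scale:
  assumes a: "a \<in> uniform_closure C" "bounded (range a)"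
  shows "(\<lambda>x. z * a x) \<in> uniform_closure C"
proof (rule uniform_closureI)
  fix e :: real
  assume "e > 0"
  define \<delta> where "\<delta> = e / (cmod z + 1)"
  have "\<delta> > 0"
    using \<open>e > 0\<close> by (simp add: \<delta>_def add_nonneg_pos)
  have "cmod z * \<delta> \<le> (cmod z + 1) * \<delta>"
    using \<open>\<delta> > 0\<close> by simp
  also have "\<dots> = e"
    using add_nonneg_pos[OF norm_ge_zero zero_less_one, of z] by (simp add: \<delta>_def)
  finally have "cmod z * \<delta> \<le> e" .
  obtain c where "c \<in> C" and c: "\<And>x. cmod (a x - c x) < \<delta>"
    using uniform_closure_approx[OF a \<open>\<delta> > 0\<close>] by blast
  have "cmod (z * a x - z * c x) \<le> e" for x
  proof -
    have "cmod (z * a x - z * c x) = cmod z * cmod (a x - c x)"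
      by (simp flip: norm_mult add: right_diff_distrib)
    also have "\<dots> \<le> cmod z * \<delta>"
      using c[of x] by (simp add: mult_left_mono)
    finally show ?thesis
      using \<open>cmod z * \<delta> \<le> e\<close> by linarith
  qed
  then show "\<exists>c\<in>C. \<forall>x. cmod (z * a x - c x) \<le> e"
    using scale[OF \<open>c \<in> C\<close>] by (intro bexI[of _ "\<lambda>x. z * c x"]) auto
qed

lemma uniform_closure_mult:
  assumes a: "a \<in> uniform_closure C" "bounded (range a)"
    and b: "b \<in> uniform_closure C" "bounded (range b)"
  shows "(\<lambda>x. a x * b x) \<in> uniform_closure C"
proof (rule uniform_closureI)
  fix e :: real
  assume "e > 0"
  obtain Ma where Ma: "Ma > 0" "\<And>x. cmod (a x) \<le> Ma"
    using a(2) by (auto simp: bounded_pos)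
  obtain Mb where Mb: "Mb > 0" "\<And>x. cmod (b x) \<le> Mb"
    using b(2) by (auto simp: bounded_pos)
  define \<delta> where "\<delta> = min 1 (e / (Ma + Mb + 1))"
  have "\<delta> > 0" "\<delta> \<le> 1"
    using \<open>e > 0\<close> Ma Mb by (simp_all add: \<delta>_def)
  have "\<delta> \<le> e / (Ma + Mb + 1)"
    by (simp add: \<delta>_def)
  then have "(Ma + Mb + 1) * \<delta> \<le> e"
    using Ma Mb by (simp add: pos_le_divide_eq mult.commute)
  obtain c where "c \<in> C" and c: "\<And>x. cmod (a x - c x) < \<delta>"
    using uniform_closure_approx[OF a \<open>\<delta> > 0\<close>] by blast
  obtain d where "d \<in> C" and d: "\<And>x. cmod (b x - d x) < \<delta>"
    using uniform_closure_approx[OF b \<open>\<delta> > 0\<close>] by blast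
  have "cmod (a x * b x - c x * d x) \<le> e" for x
  proof -
    have "cmod (d x) \<le> Mb + 1"
      using norm_triangle_sub[of "d x" "b x"] Mb(2)[of x] d[of x] \<open>\<delta> \<le> 1\<close>
      by (simp add: norm_minus_commute)
    have "cmod (a x * b x - c x * d x) \<le> cmod (a x) * cmod (b x - d x) + cmod (a x - c x) * cmod (d x)"
      by (rule norm_mult_diff_le)
    also have "\<dots> \<le> Ma * \<delta> + \<delta> * (Mb + 1)"
    proof (rule add_mono)
      show "cmod (a x) * cmod (b x - d x) \<le> Ma * \<delta>"
        using Ma(2)[of x] d[of x] \<open>0 < Ma\<close> by (intro mult_mono) simp_all
      show "cmod (a x - c x) * cmod (d x) \<le> \<delta> * (Mb + 1)"
        using \<open>cmod (d x) \<le> Mb + 1\<close> c[of x] \<open>0 < \<delta>\<close> by (intro mult_mono) simp_all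
    qed
    finally show ?thesis
      using \<open>(Ma + Mb + 1) * \<delta> \<le> e\<close> by (simp add: algebra_simps)
  qed
  then show "\<exists>c\<in>C. \<forall>x. cmod (a x * b x - c x) \<le> e"
    using mult[OF \<open>c \<in> C\<close> \<open>d \<in> C\<close>] by (intro bexI[of _ "\<lambda>x. c x * d x"]) auto
qed

end


lemma admissible_B_zero: "admissible_B B \<Longrightarrow> (\<lambda>x. 0) \<in> B"
  unfolding admissible_B_def by simp

lemma admissible_B_lin:
  "admissible_B B \<Longrightarrow> f \<in> B \<Longrightarrow> g \<in> B \<Longrightarrow> (\<lambda>x. r * f x + s * g x) \<in> B"
  unfolding admissible_B_def by simp

lemma admissible_B_mult:
  "admissible_B B \<Longrightarrow> f \<in> B \<Longrightarrow> g \<in> B \<Longrightarrow> (\<lambda>x. f x * g x) \<in> B"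
  unfolding admissible_B_def by simp

lemma admissible_B_bounded: "admissible_B B \<Longrightarrow> f \<in> B \<Longrightarrow> bounded (range f)"
  unfolding admissible_B_def by simp

definition complexification :: "('a \<Rightarrow> real) set \<Rightarrow> ('a \<Rightarrow> complex) set" where
  "complexification B =
     {\<lambda>x. complex_of_real (f x) + \<i> * complex_of_real (g x) | f g. f \<in> B \<and> g \<in> B}"

lemma complexificationI:
  "f \<in> B \<Longrightarrow> g \<in> B \<Longrightarrow> c = (\<lambda>x. complex_of_real (f x) + \<i> * complex_of_real (g x)) \<Longrightarrow>
   c \<in> complexification B"
  unfolding complexification_def by blast

lemma complexificationE:
  assumes "c \<in> complexification B"
  obtains f g where "f \<in> B" "g \<in> B" "c = (\<lambda>x. complex_of_real (f x) + \<i> * complex_of_real (g x))"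
  using assms unfolding complexification_def by blast

lemma bex_complexification_iff:
  "(\<exists>c\<in>complexification B. P c) \<longleftrightarrow>
   (\<exists>f\<in>B. \<exists>g\<in>B. P (\<lambda>x. complex_of_real (f x) + \<i> * complex_of_real (g x)))"
  unfolding complexification_def by blast

lemma Aalg_eq_uniform_closure: "Aalg B = uniform_closure (complexification B)"
  unfolding Aalg_def uniform_closure_def bex_complexification_iff ..

lemma bounded_range_of_real_plus_i:
  assumes "bounded (range f)" "bounded (range g)"
  shows "bounded (range (\<lambda>x. complex_of_real (f x) + \<i> * complex_of_real (g x)))"
proof -
  obtain Mf Mg where Mf: "\<And>x. \<bar>f x\<bar> \<le> Mf" and Mg: "\<And>x. \<bar>g x\<bar> \<le> Mg"
    using assms by (auto simp: bounded_iff)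
  have "cmod (complex_of_real (f x) + \<i> * complex_of_real (g x)) \<le> Mf + Mg" for x
  proof -
    have "cmod (complex_of_real (f x) + \<i> * complex_of_real (g x))
        \<le> cmod (complex_of_real (f x)) + cmod (\<i> * complex_of_real (g x))"
      by (rule norm_triangle_ineq)
    also have "\<dots> \<le> Mf + Mg"
      using Mf[of x] Mg[of x] by (simp add: norm_mult)
    finally show ?thesis .
  qed
  then show ?thesis
    by (auto simp: bounded_iff)
qed

lemma bounded_function_algebra_complexification:
  assumes adm: "admissible_B B"
  shows "bounded_function_algebra (complexification B)"
proof
  fix c d :: "'a \<Rightarrow> complex" and z :: complex
  assume "c \<in> complexification B"
  then obtain f g where fg: "f \<in> B" "g \<in> B"
    and c: "c = (\<lambda>x. complex_of_real (f x) + \<i> * complex_of_real (g x))"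
    by (rule complexificationE)
  show "bounded (range c)"
    unfolding c using bounded_range_of_real_plus_i admissible_B_bounded[OF adm] fg by blast
  show "(\<lambda>x. z * c x) \<in> complexification B"
    by (rule complexificationI[OF admissible_B_lin[OF adm fg, of "Re z" "- Im z"]
          admissible_B_lin[OF adm fg, of "Im z" "Re z"]])
      (simp add: c fun_eq_iff complex_eq_iff)
  assume "d \<in> complexification B"
  then obtain f' g' where fg': "f' \<in> B" "g' \<in> B"
    and d: "d = (\<lambda>x. complex_of_real (f' x) + \<i> * complex_of_real (g' x))"
    by (rule complexificationE)
  show "(\<lambda>x. c x + d x) \<in> complexification B"
    by (rule complexificationI[OF admissible_B_lin[OF adm fg(1) fg'(1), of 1 1]
          admissible_B_lin[OF adm fg(2) fg'(2), of 1 1]])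
      (simp add: c d fun_eq_iff complex_eq_iff)
  have ff': "(\<lambda>x. f x * f' x) \<in> B" "(\<lambda>x. g x * g' x) \<in> B"
    "(\<lambda>x. f x * g' x) \<in> B" "(\<lambda>x. g x * f' x) \<in> B"
    using admissible_B_mult[OF adm] fg fg' by blast+
  show "(\<lambda>x. c x * d x) \<in> complexification B"
    by (rule complexificationI[OF admissible_B_lin[OF adm ff'(1,2), of 1 "-1"]
          admissible_B_lin[OF adm ff'(3,4), of 1 1]])
      (simp add: c d fun_eq_iff complex_eq_iff)
qed

lemma of_real_in_Aalg:
  assumes "admissible_B B" "f \<in> B"
  shows "(\<lambda>x. complex_of_real (f x)) \<in> Aalg B"
proof -
  have "(\<lambda>x. complex_of_real (f x)) \<in> complexification B"
    by (rule complexificationI[OF assms(2) admissible_B_zero[OF assms(1)]]) simp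
  then show ?thesis
    unfolding Aalg_eq_uniform_closure using subset_uniform_closure by blast
qed

lemma zero_in_Aalg: "admissible_B B \<Longrightarrow> (\<lambda>x. 0) \<in> Aalg B"
  using of_real_in_Aalg[OF _ admissible_B_zero] by simp


definition contractive_homs :: "('a \<Rightarrow> complex) set \<Rightarrow> (('a \<Rightarrow> complex) \<Rightarrow> complex) set" where
  "contractive_homs A = {\<phi> \<in> extensional A. \<forall>a\<in>A. \<forall>b\<in>A.
     \<phi> (\<lambda>x. a x + b x) = \<phi> a + \<phi> b \<and> \<phi> (\<lambda>x. a x * b x) = \<phi> a * \<phi> b \<and>
     (\<forall>z. \<phi> (\<lambda>x. z * a x) = z * \<phi> a) \<and> cmod (\<phi> b - \<phi> a) \<le> supnorm (\<lambda>x. b x - a x)}"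

lemma contractive_homsD:
  assumes "\<phi> \<in> contractive_homs A" "a \<in> A" "b \<in> A"
  shows "\<phi> (\<lambda>x. a x + b x) = \<phi> a + \<phi> b" "\<phi> (\<lambda>x. a x * b x) = \<phi> a * \<phi> b"
    "\<phi> (\<lambda>x. z * a x) = z * \<phi> a" "cmod (\<phi> b - \<phi> a) \<le> supnorm (\<lambda>x. b x - a x)"
  using assms unfolding contractive_homs_def by blast+

lemma closedin_contractive_homs:
  "closedin (product_topology (\<lambda>_. euclidean) A) (contractive_homs A)"
proof -
  let ?P = "product_topology (\<lambda>_. euclidean :: complex topology) A"
  have eval: "continuous_map ?P euclidean (\<lambda>\<phi>. \<phi> c)" for c
    by (rule continuous_map_product_eval)
  have eq_closed: "closedin ?P {\<phi> \<in> topspace ?P. F \<phi> = G \<phi>}"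
    if "continuous_map ?P euclidean F" "continuous_map ?P euclidean G" for F G :: "_ \<Rightarrow> complex"
    using closedin_continuous_maps_eq[OF Hausdorff_space_euclidean that] .
  have "contractive_homs A = {\<phi> \<in> topspace ?P. \<forall>a\<in>A. \<forall>b\<in>A.
     \<phi> (\<lambda>x. a x + b x) = \<phi> a + \<phi> b \<and> \<phi> (\<lambda>x. a x * b x) = \<phi> a * \<phi> b \<and>
     (\<forall>z. \<phi> (\<lambda>x. z * a x) = z * \<phi> a) \<and> cmod (\<phi> b - \<phi> a) \<le> supnorm (\<lambda>x. b x - a x)}"
    by (simp add: contractive_homs_def PiE_def)
  also have "closedin ?P \<dots>"
  proof (intro closedin_Collect_ball closedin_Collect_conj closedin_Collect_all)
    fix a b z
    show "closedin ?P {\<phi> \<in> topspace ?P. \<phi> (\<lambda>x. a x + b x) = \<phi> a + \<phi> b}"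
      "closedin ?P {\<phi> \<in> topspace ?P. \<phi> (\<lambda>x. a x * b x) = \<phi> a * \<phi> b}"
      "closedin ?P {\<phi> \<in> topspace ?P. \<phi> (\<lambda>x. z * a x) = z * \<phi> a}"
      by (intro eq_closed eval continuous_map_add continuous_map_mult
          continuous_map_canonical_const)+
    show "closedin ?P {\<phi> \<in> topspace ?P. cmod (\<phi> b - \<phi> a) \<le> supnorm (\<lambda>x. b x - a x)}"
      by (intro closedin_continuous_map_le_const continuous_map_norm continuous_map_diff eval)
  qed
  finally show ?thesis .
qed

lemma compactin_contractive_homs:
  assumes "(\<lambda>x. 0) \<in> A"
  shows "compactin (product_topology (\<lambda>_. euclidean) A) (contractive_homs A)"
proof (rule closed_compactin)
  show "compactin (product_topology (\<lambda>_. euclidean) A) (PiE A (\<lambda>a. cball (0::complex) (supnorm a)))"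
    by (simp add: compactin_PiE)
  show "contractive_homs A \<subseteq> PiE A (\<lambda>a. cball 0 (supnorm a))"
  proof
    fix \<phi> assume \<phi>: "\<phi> \<in> contractive_homs A"
    have "\<phi> (\<lambda>x. 0) = 0"
      using contractive_homsD(3)[OF \<phi> assms assms, of 0] by simp
    moreover have "cmod (\<phi> a - \<phi> (\<lambda>x. 0)) \<le> supnorm (\<lambda>x. a x - 0)" if "a \<in> A" for a
      using contractive_homsD(4)[OF \<phi> assms that] .
    ultimately have "cmod (\<phi> a) \<le> supnorm a" if "a \<in> A" for a
      using that by simp
    moreover have "\<phi> \<in> extensional A"
      using \<phi> by (simp add: contractive_homs_def)
    ultimately show "\<phi> \<in> PiE A (\<lambda>a. cball 0 (supnorm a))"
      by (simp add: PiE_def Pi_def)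
  qed
qed (rule closedin_contractive_homs)


lemma spectrum_Delta_add:
  "\<phi> \<in> spectrum_Delta B \<Longrightarrow> a \<in> Aalg B \<Longrightarrow> b \<in> Aalg B \<Longrightarrow> \<phi> (\<lambda>x. a x + b x) = \<phi> a + \<phi> b"
  unfolding spectrum_Delta_def by blast

lemma spectrum_Delta_scale:
  "\<phi> \<in> spectrum_Delta B \<Longrightarrow> a \<in> Aalg B \<Longrightarrow> \<phi> (\<lambda>x. z * a x) = z * \<phi> a"
  unfolding spectrum_Delta_def by blast

lemma spectrum_Delta_mult:
  "\<phi> \<in> spectrum_Delta B \<Longrightarrow> a \<in> Aalg B \<Longrightarrow> b \<in> Aalg B \<Longrightarrow> \<phi> (\<lambda>x. a x * b x) = \<phi> a * \<phi> b"
  unfolding spectrum_Delta_def by blast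

lemma spectrum_Delta_continuous:
  "\<phi> \<in> spectrum_Delta B \<Longrightarrow> a \<in> Aalg B \<Longrightarrow> e > 0 \<Longrightarrow>
   \<exists>d>0. \<forall>b\<in>Aalg B. supnorm (\<lambda>x. b x - a x) < d \<longrightarrow> cmod (\<phi> b - \<phi> a) < e"
  unfolding spectrum_Delta_def by blast

lemma spectrum_Delta_nonzero: "\<phi> \<in> spectrum_Delta B \<Longrightarrow> \<exists>a\<in>Aalg B. \<phi> a \<noteq> 0"
  unfolding spectrum_Delta_def by blast

context
  fixes B :: "('a \<Rightarrow> real) set"
  assumes adm: "admissible_B B"
begin

interpretation bounded_function_algebra "complexification B"
  by (rule bounded_function_algebra_complexification[OF adm])

lemma spectrum_Delta_zero: "\<phi> \<in> spectrum_Delta B \<Longrightarrow> \<phi> (\<lambda>x. 0) = 0"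
  using spectrum_Delta_scale[OF _ zero_in_Aalg[OF adm], of \<phi> 0] by simp

lemma spectrum_Delta_eq_if_supnorm_nonpos:
  assumes \<phi>: "\<phi> \<in> spectrum_Delta B" and a: "a \<in> Aalg B" and b: "b \<in> Aalg B"
    and "supnorm (\<lambda>x. b x - a x) \<le> 0"
  shows "\<phi> b = \<phi> a"
proof (rule ccontr)
  assume "\<phi> b \<noteq> \<phi> a"
  then obtain d where "d > 0"
    and d: "\<forall>c\<in>Aalg B. supnorm (\<lambda>x. c x - a x) < d \<longrightarrow> cmod (\<phi> c - \<phi> a) < cmod (\<phi> b - \<phi> a)"
    using spectrum_Delta_continuous[OF \<phi> a, of "cmod (\<phi> b - \<phi> a)"] by auto
  then have "supnorm (\<lambda>x. b x - a x) < d"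
    using assms(4) by linarith
  then show False
    using d b by auto
qed

text \<open>Without a character this can fail: if the junk value of \<open>supnorm\<close> on unbounded
  functions is \<open>\<le> 0\<close>, all unbounded functions lie in A(B). A character would vanish on all of
  them, as they are then approximated arbitrarily well by 0, and hence on all of A(B).\<close>
lemma Aalg_bounded:
  assumes \<phi>: "\<phi> \<in> spectrum_Delta B" and a: "a \<in> Aalg B"
  shows "bounded (range a)"
proof (rule ccontr)
  assume unbounded: "\<not> bounded (range a)"
  have small: "supnorm a < e" if "e > 0" for e
  proof -
    obtain c where "c \<in> complexification B" and c: "supnorm (\<lambda>x. a x - c x) < e"
      using a \<open>e > 0\<close> unfolding Aalg_eq_uniform_closure uniform_closure_def by blast
    then have "supnorm (\<lambda>x. a x - c x) = supnorm a"
      using supnorm_unbounded_eq unbounded_diff[OF unbounded bounded] unbounded by blast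
    then show ?thesis
      using c by simp
  qed
  have junk: "supnorm u \<le> 0" if "\<not> bounded (range u)" for u
  proof -
    have "supnorm a \<le> 0"
      using small[of "supnorm a"] by linarith
    then show ?thesis
      using supnorm_unbounded_eq[OF that unbounded] by simp
  qed
  have unbounded_zero: "\<phi> u = 0" if "u \<in> Aalg B" "\<not> bounded (range u)" for u
    using spectrum_Delta_eq_if_supnorm_nonpos[OF \<phi> zero_in_Aalg[OF adm] that(1)] junk[OF that(2)]
      spectrum_Delta_zero[OF \<phi>] by simp
  have "\<phi> b = 0" if b: "b \<in> Aalg B" for b
  proof (cases "bounded (range b)")
    case True
    then have "\<phi> a = \<phi> b"
      using spectrum_Delta_eq_if_supnorm_nonpos[OF \<phi> b a] junk unbounded_diff[OF unbounded] by blast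
    then show ?thesis
      using unbounded_zero[OF a unbounded] by simp
  next
    case False
    then show ?thesis
      using unbounded_zero b by blast
  qed
  then show False
    using spectrum_Delta_nonzero[OF \<phi>] by blast
qed

lemma Aalg_scale:
  "\<phi> \<in> spectrum_Delta B \<Longrightarrow> a \<in> Aalg B \<Longrightarrow> (\<lambda>x. z * a x) \<in> Aalg B"
  using uniform_closure_scale Aalg_bounded by (simp add: Aalg_eq_uniform_closure)

lemma Aalg_add:
  "\<phi> \<in> spectrum_Delta B \<Longrightarrow> a \<in> Aalg B \<Longrightarrow> b \<in> Aalg B \<Longrightarrow> (\<lambda>x. a x + b x) \<in> Aalg B"
  using uniform_closure_add Aalg_bounded by (simp add: Aalg_eq_uniform_closure)

lemma Aalg_mult:
  "\<phi> \<in> spectrum_Delta B \<Longrightarrow> a \<in> Aalg B \<Longrightarrow> b \<in> Aalg B \<Longrightarrow> (\<lambda>x. a x * b x) \<in> Aalg B"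
  using uniform_closure_mult Aalg_bounded by (simp add: Aalg_eq_uniform_closure)

lemma spectrum_Delta_power:
  assumes \<phi>: "\<phi> \<in> spectrum_Delta B" and b: "b \<in> Aalg B"
  shows "(\<lambda>x. b x ^ Suc n) \<in> Aalg B \<and> \<phi> (\<lambda>x. b x ^ Suc n) = \<phi> b ^ Suc n"
proof (induction n)
  case (Suc n)
  have "(\<lambda>x. b x ^ Suc (Suc n)) = (\<lambda>x. b x * b x ^ Suc n)"
    by simp
  then show ?case
    using Suc Aalg_mult[OF \<phi> b, of "\<lambda>x. b x ^ Suc n"]
      spectrum_Delta_mult[OF \<phi> b, of "\<lambda>x. b x ^ Suc n"] by simp
qed (use b in simp)

lemma one_le_supnorm_if_spectrum_Delta_eq_one:
  assumes \<phi>: "\<phi> \<in> spectrum_Delta B" and b: "b \<in> Aalg B" and "\<phi> b = 1"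
  shows "1 \<le> supnorm b"
proof (rule ccontr)
  assume "\<not> 1 \<le> supnorm b"
  obtain d where "d > 0" and d: "\<And>c. c \<in> Aalg B \<Longrightarrow> supnorm c < d \<Longrightarrow> cmod (\<phi> c) < 1"
    using spectrum_Delta_continuous[OF \<phi> zero_in_Aalg[OF adm] zero_less_one]
      spectrum_Delta_zero[OF \<phi>] by auto
  obtain n where n: "supnorm b ^ n < d"
    using real_arch_pow_inv[OF \<open>d > 0\<close>] \<open>\<not> 1 \<le> supnorm b\<close> by force
  have "0 \<le> supnorm b"
    using supnorm_nonneg[OF Aalg_bounded[OF \<phi> b]] .
  then have "supnorm b ^ Suc n \<le> supnorm b ^ n"
    using \<open>\<not> 1 \<le> supnorm b\<close> by (intro power_decreasing) auto
  moreover have "cmod (b x ^ Suc n) \<le> supnorm b ^ Suc n" for x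
    unfolding norm_power by (rule power_mono[OF norm_le_supnorm[OF Aalg_bounded[OF \<phi> b]] norm_ge_zero])
  then have "supnorm (\<lambda>x. b x ^ Suc n) \<le> supnorm b ^ Suc n"
    by (rule supnorm_le)
  ultimately have "supnorm (\<lambda>x. b x ^ Suc n) < d"
    using n by linarith
  then have "cmod (\<phi> (\<lambda>x. b x ^ Suc n)) < 1"
    using d spectrum_Delta_power[OF \<phi> b, of n] by blast
  then show False
    using spectrum_Delta_power[OF \<phi> b, of n] \<open>\<phi> b = 1\<close> by simp
qed

lemma spectrum_Delta_norm_le_supnorm:
  assumes \<phi>: "\<phi> \<in> spectrum_Delta B" and a: "a \<in> Aalg B"
  shows "cmod (\<phi> a) \<le> supnorm a"
proof (cases "\<phi> a = 0")
  case True
  then show ?thesis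
    using supnorm_nonneg[OF Aalg_bounded[OF \<phi> a]] by simp
next
  case False
  let ?b = "\<lambda>x. (1 / \<phi> a) * a x"
  have "\<phi> ?b = 1"
    using spectrum_Delta_scale[OF \<phi> a, of "1 / \<phi> a"] False by simp
  then have "1 \<le> supnorm ?b"
    by (rule one_le_supnorm_if_spectrum_Delta_eq_one[OF \<phi> Aalg_scale[OF \<phi> a]])
  also have "supnorm ?b \<le> supnorm a / cmod (\<phi> a)"
    using norm_le_supnorm[OF Aalg_bounded[OF \<phi> a]] False
    by (intro supnorm_le) (simp add: norm_mult norm_divide divide_right_mono)
  finally show ?thesis
    using False by (simp add: field_simps)
qed

lemma spectrum_Delta_lipschitz:
  assumes \<phi>: "\<phi> \<in> spectrum_Delta B" and a: "a \<in> Aalg B" and b: "b \<in> Aalg B"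
  shows "cmod (\<phi> b - \<phi> a) \<le> supnorm (\<lambda>x. b x - a x)"
proof -
  have diff: "(\<lambda>x. b x - a x) = (\<lambda>x. b x + (-1) * a x)"
    by simp
  have "(\<lambda>x. b x - a x) \<in> Aalg B"
    unfolding diff by (intro Aalg_add[OF \<phi> b] Aalg_scale[OF \<phi> a])
  moreover have "\<phi> (\<lambda>x. b x - a x) = \<phi> b + \<phi> (\<lambda>x. (-1) * a x)"
    unfolding diff by (rule spectrum_Delta_add[OF \<phi> b Aalg_scale[OF \<phi> a]])
  then have "\<phi> (\<lambda>x. b x - a x) = \<phi> b - \<phi> a"
    using spectrum_Delta_scale[OF \<phi> a, of "-1"] by simp
  ultimately show ?thesis
    using spectrum_Delta_norm_le_supnorm[OF \<phi>] by metis
qed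

lemma spectrum_Delta_eq_contractive_homs:
  "spectrum_Delta B = {\<phi> \<in> contractive_homs (Aalg B). \<exists>a\<in>Aalg B. \<phi> a \<noteq> 0}"
proof (intro equalityI subsetI CollectI conjI)
  fix \<phi> assume \<phi>: "\<phi> \<in> spectrum_Delta B"
  then show "\<phi> \<in> contractive_homs (Aalg B)"
    unfolding contractive_homs_def
    using spectrum_Delta_add spectrum_Delta_mult spectrum_Delta_scale spectrum_Delta_lipschitz
    by (auto simp: spectrum_Delta_def)
  show "\<exists>a\<in>Aalg B. \<phi> a \<noteq> 0"
    using spectrum_Delta_nonzero[OF \<phi>] .
next
  fix \<phi> assume "\<phi> \<in> {\<phi> \<in> contractive_homs (Aalg B). \<exists>a\<in>Aalg B. \<phi> a \<noteq> 0}"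
  then have hom: "\<phi> \<in> contractive_homs (Aalg B)" and "\<exists>a\<in>Aalg B. \<phi> a \<noteq> 0"
    by auto
  moreover have "\<exists>d>0. \<forall>b\<in>Aalg B. supnorm (\<lambda>x. b x - a x) < d \<longrightarrow> cmod (\<phi> b - \<phi> a) < e"
    if "a \<in> Aalg B" "e > 0" for a e
    using contractive_homsD(4)[OF hom that(1)] that(2) by (meson le_less_trans)
  ultimately show "\<phi> \<in> spectrum_Delta B"
    unfolding spectrum_Delta_def using contractive_homsD[OF hom]
    by (simp add: contractive_homs_def)
qed

end


lemma topspace_gelfand_top: "topspace (gelfand_top B) = spectrum_Delta B"
proof -
  have "spectrum_Delta B \<subseteq> extensional (Aalg B)"
    unfolding spectrum_Delta_def by blast
  then show ?thesis
    by (auto simp: gelfand_top_def PiE_def)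
qed

lemma closedin_gelfand_norm_ge:
  "closedin (gelfand_top B) {\<phi> \<in> spectrum_Delta B. r \<le> cmod (\<phi> a)}"
proof -
  have "continuous_map (gelfand_top B) euclidean (\<lambda>\<phi>. cmod (\<phi> a))"
    unfolding gelfand_top_def
    by (intro continuous_map_norm continuous_map_from_subtopology continuous_map_product_eval)
  from closedin_continuous_map_ge_const[OF this, of r] show ?thesis
    by (simp add: topspace_gelfand_top)
qed

lemma compactin_gelfand_norm_ge:
  assumes adm: "admissible_B B" and a: "a \<in> Aalg B" and "r > 0"
  shows "compactin (gelfand_top B) {\<phi> \<in> spectrum_Delta B. r \<le> cmod (\<phi> a)}"
proof -
  let ?P = "product_topology (\<lambda>_. euclidean :: complex topology) (Aalg B)"
  let ?K = "{\<phi> \<in> contractive_homs (Aalg B). r \<le> cmod (\<phi> a)}"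
  have K_eq: "{\<phi> \<in> spectrum_Delta B. r \<le> cmod (\<phi> a)} = ?K"
    using spectrum_Delta_eq_contractive_homs[OF adm] a \<open>r > 0\<close> by force
  have "closedin ?P {\<phi> \<in> topspace ?P. r \<le> cmod (\<phi> a)}"
    by (intro closedin_continuous_map_ge_const continuous_map_norm continuous_map_product_eval)
  then have "closedin ?P (contractive_homs (Aalg B) \<inter> {\<phi> \<in> topspace ?P. r \<le> cmod (\<phi> a)})"
    by (intro closedin_Int closedin_contractive_homs)
  moreover have "contractive_homs (Aalg B) \<inter> {\<phi> \<in> topspace ?P. r \<le> cmod (\<phi> a)} = ?K"
    using closedin_subset[OF closedin_contractive_homs] by blast
  ultimately have "compactin ?P ?K"
    by (intro closed_compactin[OF compactin_contractive_homs[OF zero_in_Aalg[OF adm]]]) auto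
  moreover have "?K \<subseteq> spectrum_Delta B"
    using K_eq by blast
  ultimately show ?thesis
    unfolding K_eq gelfand_top_def compactin_subtopology by blast
qed

theorem mainTheorem6:
  fixes B :: "('a \<Rightarrow> real) set" and f :: "'a \<Rightarrow> real" and k :: nat
  assumes "admissible_B B"
    and "\<forall>x. \<exists>g\<in>B. g x \<noteq> 0"
    and "f \<in> B" and "k \<ge> 1"
  shows "compactin (gelfand_top B) ((gelfand_top B) closure_of (iota B ` Nk k f))"
proof -
  let ?F = "\<lambda>x. complex_of_real (f x)"
  let ?S = "{\<phi> \<in> spectrum_Delta B. 1 / real k \<le> cmod (\<phi> ?F)}"
  have F: "?F \<in> Aalg B"
    using of_real_in_Aalg[OF assms(1,3)] .
  have "topspace (gelfand_top B) \<inter> iota B ` Nk k f \<subseteq> ?S"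
    using F by (auto simp: topspace_gelfand_top iota_def Nk_def)
  then have "gelfand_top B closure_of (iota B ` Nk k f) \<subseteq> ?S"
    by (subst closure_of_restrict) (rule closure_of_minimal[OF _ closedin_gelfand_norm_ge])
  moreover have "compactin (gelfand_top B) ?S"
    using compactin_gelfand_norm_ge[OF assms(1) F] assms(4) by simp
  ultimately show ?thesis
    using closed_compactin closedin_closure_of by blast
qed

end
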